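(* Let $q\in(0,\infty)$. For each choice of sign, all second-order minors of the infinite matrix $A^{\pm}=(\alpha^{\pm}_{kn})_{k,n\ge0}$ are non-negative; in particular $\alpha^{\pm}_{k,n}\alpha^{\pm}_{k+1,n+1}-\alpha^{\pm}_{k+1,n}\alpha^{\pm}_{k,n+1}\ge0$ for all $k,n\ge0$.
   Context: For $q>0$ and integers $k,n\ge 0$ ($k$ the row index, $n$ the column index), define $$\alpha^{\pm}_{kn}=\frac{k!\,\Gamma(n+2q)}{2^{n+k+2q}}\sum_{m=0}^{\min\{n,k\}}\frac{1\pm(-1)^m}{\Gamma(m+2q)\,m!\,(n-m)!\,(k-m)!}.$$ *)

theory Defs
  imports "HOL-Analysis.Analysis"
begin

definition sgn_pm :: "bool \<Rightarrow> real" where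
  "sgn_pm b = (if b then 1 else -1)"

definition alpha :: "bool \<Rightarrow> real \<Rightarrow> nat \<Rightarrow> nat \<Rightarrow> real" where
  "alpha pm q k n =
     fact k * Gamma (real n + 2 * q) / 2 powr (real n + real k + 2 * q) *
     (\<Sum>m = 0..min n k. (1 + sgn_pm pm * (-1) ^ m) /
        (Gamma (real m + 2 * q) * fact m * fact (n - m) * fact (k - m)))"

end

theory Submission imports Defs begin

text \<open>Up to the positive factor \<open>k! 2\<^sup>-\<^sup>k \<cdot> \<Gamma>(n + 2q) 2\<^sup>-\<^sup>n\<^sup>-\<^sup>2\<^sup>q\<close>, the matrix \<open>A\<^sup>\<plusminus>\<close> is
  \<open>K W K\<^sup>T\<close> with \<open>K k m = 1/(k - m)!\<close> for \<open>m \<le> k\<close> (and \<open>0\<close> otherwise) and \<open>W\<close> the diagonal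
  matrix of the non-negative weights \<open>(1 \<plusminus> (-1)\<^sup>m) / (\<Gamma>(m + 2q) m!)\<close>. The kernel \<open>K\<close> is
  totally positive of order 2 because \<open>(a + d)!/a!\<close> increases in \<open>a\<close>, and by the
  Cauchy--Binet formula for \<open>2 \<times> 2\<close> minors this property survives products of kernels
  and scaling of rows and columns by non-negative factors.\<close>

definition tp2 :: "('i::linorder \<Rightarrow> 'j::linorder \<Rightarrow> 'a::linordered_idom) \<Rightarrow> bool" where
  "tp2 K \<longleftrightarrow> (\<forall>i i' j j'. i < i' \<longrightarrow> j < j' \<longrightarrow> K i j' * K i' j \<le> K i j * K i' j')"

lemma tp2I:
  "(\<And>i i' j j'. i < i' \<Longrightarrow> j < j' \<Longrightarrow> K i j' * K i' j \<le> K i j * K i' j') \<Longrightarrow> tp2 K"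
  unfolding tp2_def by blast

lemma tp2D: "tp2 K \<Longrightarrow> i < i' \<Longrightarrow> j < j' \<Longrightarrow> K i j' * K i' j \<le> K i j * K i' j'"
  unfolding tp2_def by blast

lemma tp2_transpose: "tp2 (\<lambda>j i. K i j) \<longleftrightarrow> tp2 K"
  unfolding tp2_def by (auto simp: mult.commute)

lemma tp2_scale:
  fixes K :: "'i::linorder \<Rightarrow> 'j::linorder \<Rightarrow> 'a::linordered_idom"
  assumes "tp2 K" and "\<And>i. 0 \<le> f i" and "\<And>j. 0 \<le> g j"
  shows "tp2 (\<lambda>i j. f i * K i j * g j)"
proof (rule tp2I)
  fix i i' :: 'i and j j' :: 'j assume "i < i'" "j < j'"
  then have "(f i * f i' * g j * g j') * (K i j' * K i' j) \<le> (f i * f i' * g j * g j') * (K i j * K i' j')"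
    using assms by (intro mult_left_mono tp2D) auto
  then show "f i * K i j' * g j' * (f i' * K i' j * g j) \<le> f i * K i j * g j * (f i' * K i' j' * g j')"
    by (simp add: algebra_simps)
qed

text \<open>The Cauchy--Binet formula for \<open>2 \<times> 2\<close> minors: twice the minor of the product is the
  double sum over \<open>m, m'\<close> of (minor of \<open>A\<close> on columns \<open>m, m'\<close>) times (minor of \<open>B\<close> on rows
  \<open>m, m'\<close>), and for TP2 factors every summand is non-negative.\<close>
lemma tp2_sum_product:
  fixes A :: "'i::linorder \<Rightarrow> 'm::linorder \<Rightarrow> 'a::linordered_idom" and B :: "'m \<Rightarrow> 'j::linorder \<Rightarrow> 'a"
  assumes "tp2 A" and "tp2 B"
  shows "tp2 (\<lambda>i j. \<Sum>m\<in>S. A i m * B m j)"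
proof (rule tp2I)
  fix i i' :: 'i and j j' :: 'j assume ii': "i < i'" and jj': "j < j'"
  define a where "a m m' = A i m * A i' m' - A i m' * A i' m" for m m'
  define b where "b m m' = B m j * B m' j' - B m j' * B m' j" for m m'
  define T where "T = (\<Sum>m\<in>S. \<Sum>m'\<in>S. A i m * A i' m' * b m m')"
  have minor: "(\<Sum>m\<in>S. A i m * B m j) * (\<Sum>m\<in>S. A i' m * B m j')
      - (\<Sum>m\<in>S. A i m * B m j') * (\<Sum>m\<in>S. A i' m * B m j) = T"
    unfolding T_def b_def sum_product by (simp add: algebra_simps sum_subtractf[symmetric])
  have swapped: "(\<Sum>m\<in>S. \<Sum>m'\<in>S. A i m' * A i' m * b m m') = - T"
  proof -
    have "(\<Sum>m\<in>S. \<Sum>m'\<in>S. A i m' * A i' m * b m m') = (\<Sum>m'\<in>S. \<Sum>m\<in>S. A i m' * A i' m * b m m')"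
      by (rule sum.swap)
    also have "\<dots> = (\<Sum>m'\<in>S. \<Sum>m\<in>S. - (A i m' * A i' m * b m' m))"
      unfolding b_def by (simp add: algebra_simps)
    finally show ?thesis unfolding T_def by (simp add: sum_negf)
  qed
  have summand_nonneg: "0 \<le> a m m' * b m m'" for m m'
  proof (cases m m' rule: linorder_cases)
    case less
    then show ?thesis using tp2D[OF assms(1) ii' less] tp2D[OF assms(2) less jj']
      unfolding a_def b_def by (intro mult_nonneg_nonneg) (auto simp: algebra_simps)
  next
    case equal
    then show ?thesis unfolding b_def by simp
  next
    case greater
    then show ?thesis using tp2D[OF assms(1) ii' greater] tp2D[OF assms(2) greater jj']
      unfolding a_def b_def by (intro mult_nonpos_nonpos) (auto simp: algebra_simps)
  qed
  have "0 \<le> (\<Sum>m\<in>S. \<Sum>m'\<in>S. a m m' * b m m')"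
    using summand_nonneg by (intro sum_nonneg)
  also have "\<dots> = T - (\<Sum>m\<in>S. \<Sum>m'\<in>S. A i m' * A i' m * b m m')"
    unfolding T_def a_def by (simp add: algebra_simps sum_subtractf)
  also have "\<dots> = 2 * T" using swapped by simp
  finally show "(\<Sum>m\<in>S. A i m * B m j') * (\<Sum>m\<in>S. A i' m * B m j)
      \<le> (\<Sum>m\<in>S. A i m * B m j) * (\<Sum>m\<in>S. A i' m * B m j')"
    using minor by (simp add: zero_le_mult_iff)
qed

lemma fact_add_mult_fact_le:
  assumes "a \<le> b"
  shows "fact (a + d) * fact b \<le> (fact (b + d) * fact a :: 'a::linordered_semidom)"
proof (induction d)
  case 0
  then show ?case by (simp add: mult.commute)
next
  case (Suc d)
  have "fact (a + Suc d) * fact b = of_nat (a + d + 1) * (fact (a + d) * fact b :: 'a)"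
    by (simp add: algebra_simps)
  also have "\<dots> \<le> of_nat (b + d + 1) * (fact (b + d) * fact a)"
    by (rule mult_mono) (use Suc assms in auto)
  also have "\<dots> = fact (b + Suc d) * fact a"
    by (simp add: algebra_simps)
  finally show ?case .
qed

definition inv_fact_diff :: "nat \<Rightarrow> nat \<Rightarrow> real" where
  "inv_fact_diff k m = (if m \<le> k then 1 / fact (k - m) else 0)"

lemma tp2_inv_fact_diff: "tp2 inv_fact_diff"
proof (rule tp2I)
  fix k k' m m' :: nat assume "k < k'" "m < m'"
  show "inv_fact_diff k m' * inv_fact_diff k' m \<le> inv_fact_diff k m * inv_fact_diff k' m'"
  proof (cases "m' \<le> k")
    case False
    then show ?thesis by (simp add: inv_fact_diff_def)
  next
    case True
    define a b d where "a = k - m'" and "b = k' - m'" and "d = m' - m"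
    have "a \<le> b" and diffs: "k - m = a + d" "k' - m = b + d"
      using \<open>k < k'\<close> \<open>m < m'\<close> True by (auto simp: a_def b_def d_def)
    have "(fact (a + d) * fact b :: real) \<le> fact (b + d) * fact a"
      using \<open>a \<le> b\<close> by (rule fact_add_mult_fact_le)
    then have "1 / (fact a * fact (b + d)) \<le> (1 / (fact (a + d) * fact b) :: real)"
      by (intro divide_left_mono) (auto simp: mult.commute)
    moreover have "inv_fact_diff k m' * inv_fact_diff k' m = 1 / (fact a * fact (b + d))"
      using \<open>k < k'\<close> \<open>m < m'\<close> True by (simp add: inv_fact_diff_def diffs a_def)
    moreover have "inv_fact_diff k m * inv_fact_diff k' m' = 1 / (fact (a + d) * fact b)"
      using \<open>k < k'\<close> \<open>m < m'\<close> True by (simp add: inv_fact_diff_def diffs b_def)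
    ultimately show ?thesis by simp
  qed
qed

definition alpha_weight :: "bool \<Rightarrow> real \<Rightarrow> nat \<Rightarrow> real" where
  "alpha_weight pm q m = (1 + sgn_pm pm * (-1) ^ m) / (Gamma (real m + 2 * q) * fact m)"

lemma alpha_weight_nonneg:
  assumes "q > 0"
  shows "0 \<le> alpha_weight pm q m"
proof -
  have "0 < Gamma (real m + 2 * q)"
    using assms by (intro Gamma_real_pos) auto
  moreover have "0 \<le> 1 + sgn_pm pm * (-1) ^ m"
    by (cases pm; cases "even m") (auto simp: sgn_pm_def)
  ultimately show ?thesis
    unfolding alpha_weight_def by (intro divide_nonneg_pos) auto
qed

text \<open>Truncating the sum at any \<open>N \<ge> min n k\<close> is harmless because \<open>inv_fact_diff\<close> vanishes
  above the diagonal; a common \<open>N\<close> for the four entries of a minor puts them into one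
  matrix product.\<close>
lemma alpha_eq_sum:
  assumes "min n k \<le> N"
  shows "alpha pm q k n = fact k / 2 ^ k
      * (\<Sum>m\<le>N. inv_fact_diff k m * alpha_weight pm q m * inv_fact_diff n m)
      * (Gamma (real n + 2 * q) / (2 ^ n * 2 powr (2 * q)))"
proof -
  have "(2::real) powr (real n + real k + 2 * q) = 2 ^ n * 2 ^ k * 2 powr (2 * q)"
    by (simp add: powr_add powr_realpow)
  moreover have "(\<Sum>m = 0..min n k. (1 + sgn_pm pm * (-1) ^ m) /
        (Gamma (real m + 2 * q) * fact m * fact (n - m) * fact (k - m)))
     = (\<Sum>m\<in>{0..min n k}. inv_fact_diff k m * alpha_weight pm q m * inv_fact_diff n m)"
    by (intro sum.cong) (auto simp: alpha_weight_def inv_fact_diff_def)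
  moreover have "\<dots> = (\<Sum>m\<le>N. inv_fact_diff k m * alpha_weight pm q m * inv_fact_diff n m)"
    using assms by (intro sum.mono_neutral_left) (auto simp: inv_fact_diff_def)
  ultimately show ?thesis
    unfolding alpha_def by (simp add: field_simps)
qed

lemma tp2_alpha:
  assumes "q > 0"
  shows "tp2 (alpha pm q)"
proof (rule tp2I)
  fix k k' n n' :: nat assume "k < k'" "n < n'"
  define N where "N = k' + n'"
  define C where "C k n = fact k / 2 ^ k
      * (\<Sum>m\<le>N. inv_fact_diff k m * alpha_weight pm q m * inv_fact_diff n m)
      * (Gamma (real n + 2 * q) / (2 ^ n * 2 powr (2 * q)))" for k n
  have "tp2 (\<lambda>k m. inv_fact_diff k m * alpha_weight pm q m)"
    using tp2_scale[OF tp2_inv_fact_diff, of "\<lambda>_. 1" "alpha_weight pm q"]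
    by (simp add: alpha_weight_nonneg[OF assms])
  moreover have "tp2 (\<lambda>m n. inv_fact_diff n m)"
    using tp2_transpose[THEN iffD2, OF tp2_inv_fact_diff] .
  ultimately have "tp2 (\<lambda>k n. \<Sum>m\<le>N. inv_fact_diff k m * alpha_weight pm q m * inv_fact_diff n m)"
    by (rule tp2_sum_product)
  moreover have "0 \<le> Gamma (real n + 2 * q) / (2 ^ n * 2 powr (2 * q))" for n
    using Gamma_real_pos[of "real n + 2 * q"] assms by simp
  ultimately have "tp2 C"
    unfolding C_def by (intro tp2_scale) auto
  then have "C k n' * C k' n \<le> C k n * C k' n'"
    using \<open>k < k'\<close> \<open>n < n'\<close> by (rule tp2D)
  moreover have "alpha pm q k n = C k n" if "k \<le> k'" "n \<le> n'" for k n
    unfolding C_def using that by (intro alpha_eq_sum) (simp add: N_def)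
  ultimately show "alpha pm q k n' * alpha pm q k' n \<le> alpha pm q k n * alpha pm q k' n'"
    using \<open>k < k'\<close> \<open>n < n'\<close> by simp
qed

theorem proposition3p1:
  fixes q :: real
  assumes "q > 0"
  shows "\<forall>pm::bool.
           (\<forall>k1 k2 n1 n2 :: nat. k1 < k2 \<longrightarrow> n1 < n2 \<longrightarrow>
              alpha pm q k1 n1 * alpha pm q k2 n2 - alpha pm q k1 n2 * alpha pm q k2 n1 \<ge> 0)
         \<and> (\<forall>k n :: nat.
              alpha pm q k n * alpha pm q (k+1) (n+1) - alpha pm q (k+1) n * alpha pm q k (n+1) \<ge> 0)"
proof (intro allI conjI impI)
  fix pm :: bool
  note minors = tp2D[OF tp2_alpha[OF assms, of pm]]
  show "alpha pm q k1 n1 * alpha pm q k2 n2 - alpha pm q k1 n2 * alpha pm q k2 n1 \<ge> 0"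
    if "k1 < k2" "n1 < n2" for k1 k2 n1 n2
    using minors[OF that] by simp
  show "alpha pm q k n * alpha pm q (k+1) (n+1) - alpha pm q (k+1) n * alpha pm q k (n+1) \<ge> 0"
    for k n
    using minors[of k "k+1" n "n+1"] by (simp add: mult.commute)
qed

end
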